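(* Let $(X,\mu)$ be a probability space. If $\mu$ is nontrivial (there exist measurable sets of measure strictly between $0$ and $1$), then for any $\mu$-preserving transformation $T$ of $X$ there exists a sequence $\{A_n\}$ of measurable subsets of $X$ with $\sum_n\mu(A_n)=\infty$ which is not Borel-Cantelli. Furthermore, if $\mu$ is non-atomic, then for any $\mu$-preserving transformation $T$ there exists a sequence $\{A_n\}$ of measurable subsets with $\sum_n\mu(A_n)=\infty$ such that for $\mu$-a.e. $x\in X$ there are at most finitely many $n$ with $T^nx\in A_n$.
   Context: A sequence of measurable sets $A_n$ with $\sum\mu(A_n)=\infty$ is Borel-Cantelli if for $\mu$-a.e. $x$ there are infinitely many $n$ with $T^nx\in A_n$. *)

theory Defs
  imports "HOL-Probability.Probability"
begin

definition measure_preserving_map :: "'a measure \<Rightarrow> ('a \<Rightarrow> 'a) \<Rightarrow> bool" where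
  "measure_preserving_map M T \<longleftrightarrow> T \<in> M \<rightarrow>\<^sub>M M \<and>
     (\<forall>A \<in> sets M. emeasure M (T -` A \<inter> space M) = emeasure M A)"

definition nontrivial_measure :: "'a measure \<Rightarrow> bool" where
  "nontrivial_measure M \<longleftrightarrow> (\<exists>A \<in> sets M. 0 < measure M A \<and> measure M A < 1)"

definition non_atomic :: "'a measure \<Rightarrow> bool" where
  "non_atomic M \<longleftrightarrow> (\<forall>A \<in> sets M. 0 < emeasure M A \<longrightarrow>
      (\<exists>B \<in> sets M. B \<subseteq> A \<and> 0 < emeasure M B \<and> emeasure M B < emeasure M A))"

definition borel_cantelli :: "'a measure \<Rightarrow> ('a \<Rightarrow> 'a) \<Rightarrow> (nat \<Rightarrow> 'a set) \<Rightarrow> bool" where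
  "borel_cantelli M T A \<longleftrightarrow> (AE x in M. \<exists>\<^sub>\<infinity> n. (T ^^ n) x \<in> A n)"

end

theory Submission
  imports Defs
begin

(*
  If M has measurable sets of arbitrarily small positive measure, choose C k with
  measure below 2^-k and let a block of about 1 / measure M (C k) consecutive times n
  all test the single event "T^(N (k+1)) x \<in> C k", pulled back to time n. Every block
  contributes at least 1 to the sum of the measures, but by the first Borel-Cantelli
  lemma almost every x lies in only finitely many of these summable events. Non-atomic
  measures have such small sets.

  Otherwise all positive measures are bounded below by some d > 0. Given B of measure
  strictly between 0 and the total mass, choose A n among B and its complement greedily,
  so that the points whose orbit has avoided A 0, ..., A n keep positive, hence at
  least d, measure. In the limit a set of measure at least d never visits the A n.
*)

lemma measure_preserving_map_measurable:
  "measure_preserving_map M T \<Longrightarrow> T \<in> M \<rightarrow>\<^sub>M M"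
  by (simp add: measure_preserving_map_def)

lemma measure_preserving_map_emeasure_vimage:
  "measure_preserving_map M T \<Longrightarrow> A \<in> sets M \<Longrightarrow> emeasure M (T -` A \<inter> space M) = emeasure M A"
  by (simp add: measure_preserving_map_def)

lemma measure_preserving_map_measure_vimage:
  "measure_preserving_map M T \<Longrightarrow> A \<in> sets M \<Longrightarrow> measure M (T -` A \<inter> space M) = measure M A"
  by (simp add: measure_def measure_preserving_map_emeasure_vimage)

lemma measure_preserving_map_vimage_sets:
  "measure_preserving_map M T \<Longrightarrow> A \<in> sets M \<Longrightarrow> T -` A \<inter> space M \<in> sets M"
  by (rule measurable_sets[OF measure_preserving_map_measurable])

lemma measure_preserving_map_id: "measure_preserving_map M id"
  using sets.sets_into_space by (fastforce simp: measure_preserving_map_def Int_absorb2)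

lemma measure_preserving_map_comp:
  assumes S: "measure_preserving_map M S" and T: "measure_preserving_map M T"
  shows "measure_preserving_map M (S \<circ> T)"
  unfolding measure_preserving_map_def
proof (intro conjI ballI)
  show "S \<circ> T \<in> M \<rightarrow>\<^sub>M M"
    using measurable_comp[OF measure_preserving_map_measurable[OF T]
        measure_preserving_map_measurable[OF S]] .
  fix A assume A: "A \<in> sets M"
  have "(S \<circ> T) -` A \<inter> space M = T -` (S -` A \<inter> space M) \<inter> space M"
    using measurable_space[OF measure_preserving_map_measurable[OF T]] by auto
  also have "emeasure M \<dots> = emeasure M (S -` A \<inter> space M)"
    by (rule measure_preserving_map_emeasure_vimage[OF T measure_preserving_map_vimage_sets[OF S A]])
  also have "\<dots> = emeasure M A"
    using S A by (rule measure_preserving_map_emeasure_vimage)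
  finally show "emeasure M ((S \<circ> T) -` A \<inter> space M) = emeasure M A" .
qed

lemma measure_preserving_map_funpow:
  "measure_preserving_map M T \<Longrightarrow> measure_preserving_map M (T ^^ n)"
  by (induction n) (simp_all add: measure_preserving_map_id measure_preserving_map_comp)

lemma borel_cantelli_iff_AE_infinite:
  "borel_cantelli M T A \<longleftrightarrow> (AE x in M. infinite {n. (T ^^ n) x \<in> A n})"
  by (simp add: borel_cantelli_def INFM_iff_infinite)

lemma not_borel_cantelli_if_AE_finite:
  assumes "emeasure M (space M) \<noteq> 0" and "AE x in M. finite {n. (T ^^ n) x \<in> A n}"
  shows "\<not> borel_cantelli M T A"
proof
  assume "borel_cantelli M T A"
  with assms(2) have "AE x in M. False"
    unfolding borel_cantelli_iff_AE_infinite by eventually_elim simp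
  with assms(1) show False
    using AE_iff_measurable[of "space M" M "\<lambda>_. False"] by simp
qed

lemma not_borel_cantelli_if_never_visited:
  assumes S: "S \<in> sets M" "emeasure M S \<noteq> 0"
    and never: "\<And>x n. x \<in> S \<Longrightarrow> (T ^^ n) x \<notin> A n"
  shows "\<not> borel_cantelli M T A"
proof
  assume "borel_cantelli M T A"
  then have "AE x in M. x \<notin> S"
    unfolding borel_cantelli_iff_AE_infinite by eventually_elim (auto simp: never)
  with S show False
    using AE_iff_measurable[of S M "\<lambda>x. x \<notin> S"] sets.sets_into_space by blast
qed

definition block_index :: "(nat \<Rightarrow> nat) \<Rightarrow> nat \<Rightarrow> nat" where
  "block_index N n = (LEAST k. n < N (Suc k))"

lemma block_index_bounds:
  assumes "strict_mono N" and "N 0 = 0"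
  shows "N (block_index N n) \<le> n" and "n < N (Suc (block_index N n))"
proof -
  have "n < N (Suc n)"
    using seq_suble[OF assms(1), of "Suc n"] by simp
  then show "n < N (Suc (block_index N n))"
    unfolding block_index_def by (rule LeastI)
  show "N (block_index N n) \<le> n"
  proof (cases "block_index N n")
    case (Suc j)
    then have "\<not> n < N (Suc j)"
      using not_less_Least[of j "\<lambda>k. n < N (Suc k)"] by (simp add: block_index_def)
    with Suc show ?thesis by simp
  qed (simp add: assms(2))
qed

lemma block_index_ge:
  assumes "strict_mono N" and "N 0 = 0" and "N k \<le> n"
  shows "k \<le> block_index N n"
proof (rule ccontr)
  assume "\<not> k \<le> block_index N n"
  then have "N (Suc (block_index N n)) \<le> N k"
    using strict_mono_less_eq[OF assms(1)] by simp
  with assms(3) block_index_bounds(2)[OF assms(1,2), of n] show False by simp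
qed

lemma block_index_eqI:
  assumes "strict_mono N" and "N 0 = 0" and "N k \<le> n" and "n < N (Suc k)"
  shows "block_index N n = k"
proof -
  have "block_index N n < Suc k"
    using block_index_bounds(1)[OF assms(1,2), of n] assms(4) strict_mono_less[OF assms(1)]
    by (metis le_less_trans)
  with block_index_ge[OF assms(1-3)] show ?thesis by simp
qed

lemma sum_atLeastLessThan_blocks:
  fixes f :: "nat \<Rightarrow> 'a::comm_monoid_add"
  assumes "mono N"
  shows "(\<Sum>n\<in>{N 0..<N K}. f n) = (\<Sum>k<K. \<Sum>n\<in>{N k..<N (Suc k)}. f n)"
proof (induction K)
  case (Suc K)
  have "N 0 \<le> N K" "N K \<le> N (Suc K)"
    using assms by (simp_all add: monoD)
  then have "(\<Sum>n\<in>{N 0..<N (Suc K)}. f n) = (\<Sum>n\<in>{N 0..<N K}. f n) + (\<Sum>n\<in>{N K..<N (Suc K)}. f n)"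
    by (rule sum.atLeastLessThan_concat[symmetric])
  with Suc show ?case
    by simp
qed simp

lemma suminf_eq_top_if_block_sums_ge_one:
  fixes f :: "nat \<Rightarrow> ennreal"
  assumes "mono N" and "\<And>k. 1 \<le> (\<Sum>n\<in>{N k..<N (Suc k)}. f n)"
  shows "(\<Sum>n. f n) = \<infinity>"
proof -
  have lower: "of_nat K \<le> (\<Sum>n. f n)" for K
  proof -
    have "of_nat K = (\<Sum>k<K. 1::ennreal)"
      by simp
    also have "\<dots> \<le> (\<Sum>k<K. \<Sum>n\<in>{N k..<N (Suc k)}. f n)"
      by (intro sum_mono assms(2))
    also have "\<dots> = (\<Sum>n\<in>{N 0..<N K}. f n)"
      by (rule sum_atLeastLessThan_blocks[OF assms(1), symmetric])
    also have "\<dots> \<le> (\<Sum>n<N K. f n)"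
      by (intro sum_mono2) auto
    also have "\<dots> \<le> (\<Sum>n. f n)"
      by (rule sum_le_suminf) auto
    finally show ?thesis .
  qed
  show ?thesis
  proof (rule ccontr)
    assume "(\<Sum>n. f n) \<noteq> \<infinity>"
    then obtain K where "(\<Sum>n. f n) < of_nat K"
      using ennreal_Ex_less_of_nat by (auto simp: less_top)
    with lower[of K] show False
      by simp
  qed
qed

text \<open>All times n of the k-th block {N k..<N (Suc k)} test the same event
  T^(N (Suc k)) x \<in> C k.\<close>

definition block_preimage ::
    "'a measure \<Rightarrow> ('a \<Rightarrow> 'a) \<Rightarrow> (nat \<Rightarrow> nat) \<Rightarrow> (nat \<Rightarrow> 'a set) \<Rightarrow> nat \<Rightarrow> 'a set" where
  "block_preimage M T N C n =
     (T ^^ (N (Suc (block_index N n)) - n)) -` C (block_index N n) \<inter> space M"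

lemma block_preimage_sets:
  "measure_preserving_map M T \<Longrightarrow> (\<And>k. C k \<in> sets M) \<Longrightarrow> block_preimage M T N C n \<in> sets M"
  unfolding block_preimage_def by (intro measure_preserving_map_vimage_sets measure_preserving_map_funpow)

lemma emeasure_block_preimage:
  "measure_preserving_map M T \<Longrightarrow> (\<And>k. C k \<in> sets M) \<Longrightarrow>
    emeasure M (block_preimage M T N C n) = emeasure M (C (block_index N n))"
  unfolding block_preimage_def by (intro measure_preserving_map_emeasure_vimage measure_preserving_map_funpow)

lemma funpow_in_block_preimage_iff:
  assumes T: "measure_preserving_map M T" and N: "strict_mono N" "N 0 = 0" and x: "x \<in> space M"
  shows "(T ^^ n) x \<in> block_preimage M T N C n \<longleftrightarrow>
    (T ^^ N (Suc (block_index N n))) x \<in> C (block_index N n)"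
proof -
  have "N (Suc (block_index N n)) - n + n = N (Suc (block_index N n))"
    using block_index_bounds(2)[OF N] by (simp add: less_imp_le)
  then have "(T ^^ (N (Suc (block_index N n)) - n)) ((T ^^ n) x) = (T ^^ N (Suc (block_index N n))) x"
    by (metis funpow_add o_apply)
  moreover have "(T ^^ n) x \<in> space M"
    using measurable_space[OF measure_preserving_map_measurable[OF measure_preserving_map_funpow[OF T]] x] .
  ultimately show ?thesis
    unfolding block_preimage_def by simp
qed

lemma (in finite_measure) AE_finite_visits_block_preimage:
  assumes T: "measure_preserving_map M T" and N: "strict_mono N" "N 0 = 0"
    and C: "\<And>k. C k \<in> sets M" "summable (\<lambda>k. measure M (C k))"
  shows "AE x in M. finite {n. (T ^^ n) x \<in> block_preimage M T N C n}"
proof -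
  define G where "G k = (T ^^ N (Suc k)) -` C k \<inter> space M" for k
  have G: "G k \<in> sets M" "measure M (G k) = measure M (C k)" for k
    unfolding G_def using T C(1)
    by (simp_all add: measure_preserving_map_funpow measure_preserving_map_vimage_sets
        measure_preserving_map_measure_vimage)
  have "AE x in M. eventually (\<lambda>k. x \<in> space M - G k) sequentially"
    using G C(2) by (intro borel_cantelli_AE1) (auto simp: less_top[symmetric])
  then show ?thesis
  proof eventually_elim
    case (elim x)
    then obtain K where K: "\<And>k. K \<le> k \<Longrightarrow> x \<in> space M - G k"
      by (auto simp: eventually_sequentially)
    then have x: "x \<in> space M"
      by blast
    have "{n. (T ^^ n) x \<in> block_preimage M T N C n} \<subseteq> {..<N K}"
    proof (rule subsetI, rule ccontr)
      fix n assume "n \<in> {n. (T ^^ n) x \<in> block_preimage M T N C n}" "n \<notin> {..<N K}"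
      then have "x \<in> G (block_index N n)" "K \<le> block_index N n"
        using funpow_in_block_preimage_iff[OF T N x] block_index_ge[OF N] x
        by (auto simp: G_def)
      with K show False by blast
    qed
    then show ?case
      by (rule finite_subset) simp
  qed
qed

lemma suminf_emeasure_block_preimage:
  assumes T: "measure_preserving_map M T" and N: "strict_mono N" "N 0 = 0"
    and C: "\<And>k. C k \<in> sets M" "\<And>k. 1 \<le> of_nat (N (Suc k) - N k) * emeasure M (C k)"
  shows "(\<Sum>n. emeasure M (block_preimage M T N C n)) = \<infinity>"
proof (rule suminf_eq_top_if_block_sums_ge_one)
  show "mono N"
    using N(1) by (rule strict_mono_mono)
  fix k
  have "(\<Sum>n\<in>{N k..<N (Suc k)}. emeasure M (block_preimage M T N C n)) =
      (\<Sum>n\<in>{N k..<N (Suc k)}. emeasure M (C k))"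
    by (intro sum.cong) (auto simp: emeasure_block_preimage[OF T C(1)] block_index_eqI[OF N])
  with C(2)[of k] show "1 \<le> (\<Sum>n\<in>{N k..<N (Suc k)}. emeasure M (block_preimage M T N C n))"
    by simp
qed

lemma (in finite_measure) exists_divergent_sequence_with_AE_finite_visits:
  assumes T: "measure_preserving_map M T"
    and small: "\<And>e. 0 < e \<Longrightarrow> \<exists>C\<in>sets M. 0 < measure M C \<and> measure M C < e"
  shows "\<exists>A. (\<forall>n. A n \<in> sets M) \<and> (\<Sum>n. emeasure M (A n)) = \<infinity> \<and>
           (AE x in M. finite {n. (T ^^ n) x \<in> A n})"
proof -
  obtain C where C: "\<And>k. C k \<in> sets M" "\<And>k. 0 < measure M (C k)"
    "\<And>k. measure M (C k) < (1/2) ^ k"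
    using small[of "(1/2) ^ _"] by (metis zero_less_divide_1_iff zero_less_numeral zero_less_power)
  define N where "N K = (\<Sum>k<K. nat \<lceil>1 / measure M (C k)\<rceil>)" for K
  have block_length: "N (Suc k) - N k = nat \<lceil>1 / measure M (C k)\<rceil>" for k
    by (simp add: N_def)
  have "1 \<le> real (N (Suc k) - N k) * measure M (C k)" for k
    using real_nat_ceiling_ge[of "1 / measure M (C k)"]
    by (simp only: block_length pos_divide_le_eq[OF C(2)])
  then have block_sum: "1 \<le> of_nat (N (Suc k) - N k) * emeasure M (C k)" for k
    by (simp add: emeasure_eq_measure ennreal_of_nat_eq_real_of_nat flip: ennreal_mult)
  have "strict_mono N"
  proof (rule strict_monoI_Suc)
    show "N k < N (Suc k)" for k
      using C(2)[of k] by (simp add: N_def)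
  qed
  moreover have "N 0 = 0"
    by (simp add: N_def)
  moreover have "summable (\<lambda>k. measure M (C k))"
    using C(3) by (intro summable_comparison_test[OF _ summable_geometric[of "1/2"]])
      (auto intro: less_imp_le)
  ultimately show ?thesis
    using T C(1) block_sum
    by (intro exI[of _ "block_preimage M T N C"])
      (simp add: block_preimage_sets suminf_emeasure_block_preimage AE_finite_visits_block_preimage)
qed

lemma (in finite_measure) non_atomic_exists_half_subset:
  assumes "non_atomic M" and C: "C \<in> sets M" "0 < measure M C"
  shows "\<exists>D\<in>sets M. D \<subseteq> C \<and> 0 < measure M D \<and> 2 * measure M D \<le> measure M C"
proof -
  have "0 < emeasure M C"
    using C(2) by (simp add: emeasure_eq_measure)
  then obtain D where D: "D \<in> sets M" "D \<subseteq> C" "0 < emeasure M D" "emeasure M D < emeasure M C"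
    using assms(1) C(1) unfolding non_atomic_def by blast
  then have D_measure: "0 < measure M D" "measure M D < measure M C"
    by (simp_all add: emeasure_eq_measure ennreal_less_iff)
  have C_minus_D: "measure M (C - D) = measure M C - measure M D"
    using C(1) D(1,2) by (rule finite_measure_Diff)
  show ?thesis
  proof (cases "2 * measure M D \<le> measure M C")
    case True
    with D(1,2) D_measure(1) show ?thesis
      by blast
  next
    case False
    with C(1) D(1) D_measure(2) C_minus_D show ?thesis
      by (intro bexI[of _ "C - D"]) auto
  qed
qed

lemma (in finite_measure) non_atomic_exists_small_subset:
  assumes na: "non_atomic M" and C: "C \<in> sets M" "0 < measure M C" and "0 < e"
  shows "\<exists>D\<in>sets M. D \<subseteq> C \<and> 0 < measure M D \<and> measure M D < e"
proof -
  have halving: "\<exists>D\<in>sets M. D \<subseteq> C \<and> 0 < measure M D \<and> 2 ^ k * measure M D \<le> measure M C" for k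
  proof (induction k)
    case (Suc k)
    then obtain D where D: "D \<in> sets M" "D \<subseteq> C" "0 < measure M D" "2 ^ k * measure M D \<le> measure M C"
      by blast
    then obtain D' where D': "D' \<in> sets M" "D' \<subseteq> D" "0 < measure M D'" "2 * measure M D' \<le> measure M D"
      using non_atomic_exists_half_subset[OF na] by blast
    have "2 ^ Suc k * measure M D' = 2 ^ k * (2 * measure M D')"
      by simp
    also have "\<dots> \<le> 2 ^ k * measure M D"
      using D'(4) by (intro mult_left_mono) simp_all
    also have "\<dots> \<le> measure M C"
      by (fact D(4))
    finally show ?case
      using D(2) D' by blast
  qed (use C in auto)
  obtain k where "measure M C / e < 2 ^ k"
    using real_arch_pow[of 2] by auto
  then have "measure M C < 2 ^ k * e"
    using \<open>0 < e\<close> by (simp add: divide_less_eq mult.commute)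
  moreover obtain D where D: "D \<in> sets M" "D \<subseteq> C" "0 < measure M D" "2 ^ k * measure M D \<le> measure M C"
    using halving by blast
  ultimately have "2 ^ k * measure M D < 2 ^ k * e"
    by linarith
  then show ?thesis
    using D by (intro bexI[of _ D]) simp_all
qed

lemma (in finite_measure) exists_positive_membership_pattern:
  fixes P :: "nat \<Rightarrow> 'a set"
  assumes d: "0 < d" "\<And>C. C \<in> sets M \<Longrightarrow> measure M C = 0 \<or> d \<le> measure M C"
    and space: "0 < measure M (space M)" and P: "\<And>n. P n \<in> sets M"
  shows "\<exists>s. 0 < measure M {x \<in> space M. \<forall>n. x \<in> P n \<longleftrightarrow> s n}"
proof -
  \<comment> \<open>Greedily keep a side of P n on which E n has positive, hence by the gap at least d, measure.\<close>
  define E where "E = rec_nat (space M) (\<lambda>n E. if 0 < measure M (E \<inter> P n) then E \<inter> P n else E - P n)"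
  define s where "s n = (0 < measure M (E n \<inter> P n))" for n
  have E_0: "E 0 = space M"
    by (simp add: E_def)
  have E_Suc: "E (Suc n) = (if s n then E n \<inter> P n else E n - P n)" for n
    by (simp add: E_def s_def)
  have E: "E n \<in> sets M \<and> d \<le> measure M (E n)" for n
  proof (induction n)
    case 0
    then show ?case
      using d(2)[of "space M"] space by (auto simp: E_0)
  next
    case (Suc n)
    show ?case
    proof (cases "s n")
      case True
      then show ?thesis
        using Suc P[of n] d(2)[of "E n \<inter> P n"] by (auto simp: E_Suc s_def)
    next
      case False
      then have "measure M (E n \<inter> P n) = 0"
        using measure_nonneg[of M "E n \<inter> P n"] by (simp add: s_def)
      then show ?thesis
        using Suc P[of n] finite_measure_Diff'[of "E n" "P n"] by (auto simp: E_Suc False)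
    qed
  qed
  have E_eq: "E n = {x \<in> space M. \<forall>i<n. x \<in> P i \<longleftrightarrow> s i}" for n
    by (induction n) (auto simp: E_0 E_Suc less_Suc_eq)
  have "(\<lambda>n. measure M (E n)) \<longlonglongrightarrow> measure M (\<Inter>n. E n)"
    using E by (intro finite_Lim_measure_decseq) (auto simp: decseq_Suc_iff E_Suc)
  then have "d \<le> measure M (\<Inter>n. E n)"
    using E by (intro LIMSEQ_le_const) auto
  moreover have "(\<Inter>n. E n) = {x \<in> space M. \<forall>n. x \<in> P n \<longleftrightarrow> s n}"
    unfolding E_eq by blast
  ultimately show ?thesis
    using d(1) by (intro exI[of _ s]) simp
qed

lemma (in finite_measure) exists_divergent_non_borel_cantelli_if_gap:
  assumes T: "measure_preserving_map M T"
    and B: "B \<in> sets M" "0 < measure M B" "0 < measure M (space M - B)"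
    and d: "0 < d" "\<And>C. C \<in> sets M \<Longrightarrow> measure M C = 0 \<or> d \<le> measure M C"
  shows "\<exists>A. (\<forall>n. A n \<in> sets M) \<and> (\<Sum>n. emeasure M (A n)) = \<infinity> \<and> \<not> borel_cantelli M T A"
proof -
  have "0 < measure M (space M)"
    using B(2) bounded_measure[of B] by linarith
  then obtain s where "0 < measure M {x \<in> space M. \<forall>n. x \<in> (T ^^ n) -` B \<inter> space M \<longleftrightarrow> s n}"
    using exists_positive_membership_pattern[OF d, of "\<lambda>n. (T ^^ n) -` B \<inter> space M"] B(1) T
    by (auto simp: measure_preserving_map_funpow measure_preserving_map_vimage_sets)
  moreover define S where "S = {x \<in> space M. \<forall>n. (T ^^ n) x \<in> B \<longleftrightarrow> s n}"
  moreover have "{x \<in> space M. \<forall>n. x \<in> (T ^^ n) -` B \<inter> space M \<longleftrightarrow> s n} = S"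
    by (auto simp: S_def)
  ultimately have S: "0 < measure M S"
    by simp
  define A where "A n = (if s n then space M - B else B)" for n
  have A_sets: "A n \<in> sets M" for n
    using B(1) by (simp add: A_def)
  have "S \<in> sets M"
  proof (rule ccontr)
    assume "S \<notin> sets M"
    with S show False
      by (simp add: measure_notin_sets)
  qed
  moreover have "emeasure M S \<noteq> 0"
    using S by (simp add: emeasure_eq_measure)
  moreover have "(T ^^ n) x \<notin> A n" if "x \<in> S" for x n
    using that by (auto simp: S_def A_def)
  ultimately have "\<not> borel_cantelli M T A"
    by (rule not_borel_cantelli_if_never_visited)
  moreover have "\<not> summable (\<lambda>n. measure M (A n))"
  proof
    assume "summable (\<lambda>n. measure M (A n))"
    moreover have "min (measure M B) (measure M (space M - B)) \<le> measure M (A n)" for n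
      by (simp add: A_def)
    ultimately have "min (measure M B) (measure M (space M - B)) \<le> 0"
      by (intro LIMSEQ_le_const[OF summable_LIMSEQ_zero]) blast+
    with B(2,3) show False
      by simp
  qed
  then have "(\<Sum>n. ennreal (measure M (A n))) = \<infinity>"
    unfolding infinity_ennreal_def
    by (rule summable_iff_suminf_neq_top[of "\<lambda>n. measure M (A n)", OF measure_nonneg])
  then have "(\<Sum>n. emeasure M (A n)) = \<infinity>"
    by (simp only: emeasure_eq_measure)
  ultimately show ?thesis
    using A_sets by blast
qed

lemma (in finite_measure) exists_divergent_non_borel_cantelli:
  assumes T: "measure_preserving_map M T"
    and B: "B \<in> sets M" "0 < measure M B" "0 < measure M (space M - B)"
  shows "\<exists>A. (\<forall>n. A n \<in> sets M) \<and> (\<Sum>n. emeasure M (A n)) = \<infinity> \<and> \<not> borel_cantelli M T A"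
proof (cases "\<forall>e>0. \<exists>C\<in>sets M. 0 < measure M C \<and> measure M C < e")
  case True
  then have "\<exists>A. (\<forall>n. A n \<in> sets M) \<and> (\<Sum>n. emeasure M (A n)) = \<infinity> \<and>
      (AE x in M. finite {n. (T ^^ n) x \<in> A n})"
    by (intro exists_divergent_sequence_with_AE_finite_visits[OF T]) blast
  then obtain A where A: "\<forall>n. A n \<in> sets M" "(\<Sum>n. emeasure M (A n)) = \<infinity>"
      "AE x in M. finite {n. (T ^^ n) x \<in> A n}"
    by blast
  have "0 < measure M (space M)"
    using B(2) bounded_measure[of B] by linarith
  then have "\<not> borel_cantelli M T A"
    using A(3) by (intro not_borel_cantelli_if_AE_finite) (simp_all add: emeasure_eq_measure)
  with A(1,2) show ?thesis
    by blast
next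
  case False
  then obtain d where d: "0 < d" "\<forall>C\<in>sets M. \<not> (0 < measure M C \<and> measure M C < d)"
    by auto
  have gap: "measure M C = 0 \<or> d \<le> measure M C" if "C \<in> sets M" for C
  proof -
    have "\<not> (0 < measure M C \<and> measure M C < d)"
      using d(2) that by blast
    then show ?thesis
      using measure_nonneg[of M C] by arith
  qed
  show ?thesis
    by (rule exists_divergent_non_borel_cantelli_if_gap[OF T B d(1) gap])
qed

theorem proposition1p6:
  fixes M :: "'a measure"
  assumes "prob_space M"
  shows "(nontrivial_measure M \<longrightarrow>
           (\<forall>T. measure_preserving_map M T \<longrightarrow>
              (\<exists>A :: nat \<Rightarrow> 'a set. (\<forall>n. A n \<in> sets M) \<and>
                 (\<Sum>n. emeasure M (A n)) = \<infinity> \<and> \<not> borel_cantelli M T A)))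
       \<and> (non_atomic M \<longrightarrow>
           (\<forall>T. measure_preserving_map M T \<longrightarrow>
              (\<exists>A :: nat \<Rightarrow> 'a set. (\<forall>n. A n \<in> sets M) \<and>
                 (\<Sum>n. emeasure M (A n)) = \<infinity> \<and>
                 (AE x in M. finite {n. (T ^^ n) x \<in> A n}))))"
proof -
  interpret prob_space M by fact
  show ?thesis
  proof (intro conjI impI allI)
    fix T assume "nontrivial_measure M" and T: "measure_preserving_map M T"
    then obtain B where B: "B \<in> sets M" "0 < measure M B" "measure M B < 1"
      unfolding nontrivial_measure_def by blast
    then have "0 < measure M (space M - B)"
      by (simp add: prob_compl[OF B(1)])
    with B(1,2) show "\<exists>A. (\<forall>n. A n \<in> sets M) \<and> (\<Sum>n. emeasure M (A n)) = \<infinity> \<and> \<not> borel_cantelli M T A"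
      by (rule exists_divergent_non_borel_cantelli[OF T])
  next
    fix T assume "non_atomic M" and T: "measure_preserving_map M T"
    have "0 < measure M (space M)"
      by (simp add: prob_space)
    then have "\<exists>C\<in>sets M. 0 < measure M C \<and> measure M C < e" if "0 < e" for e
      using non_atomic_exists_small_subset[OF \<open>non_atomic M\<close> sets.top _ that] by blast
    then show "\<exists>A. (\<forall>n. A n \<in> sets M) \<and> (\<Sum>n. emeasure M (A n)) = \<infinity> \<and>
        (AE x in M. finite {n. (T ^^ n) x \<in> A n})"
      by (rule exists_divergent_sequence_with_AE_finite_visits[OF T])
  qed
qed

end
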